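(* Let $\mathbf{u}=(u_1,\dots,u_n)$ be a utility profile over $C$, $|C|=m$, and let $R\in\{R^C,R^V\}$. The game $G=(\mathcal{T},R,\mathbf{u})$ admits a PNE with a winning set of size at least $2$ if and only if one of the following conditions holds: (1) each candidate is ranked first by at most one voter, and moreover $\frac{1}{n}\sum_{i\in N}u_\ell(a_i)\ge\max_{i\in N\setminus\{\ell\}}u_\ell(a_i)$ for each $\ell\in N$; (2) there exists a set of candidates $X=\{c_{\ell_1},\dots,c_{\ell_k}\}$ with $2\le k\le\min(n/2,m)$ and a partition of the voters into $k$ groups $N_1,\dots,N_k$ of size $n/k$ each, such that for each $j\in[k]$ and each $i\in N_j$ we have $c_{\ell_j}\succ_i c$ for all $c\in X\setminus\{c_{\ell_j}\}$, and moreover $\frac{1}{k}\sum_{c\in X}u_i(c)\ge\max_{c\in X\setminus\{c_{\ell_j}\}}u_i(c)$. Further, if condition (1) holds, then $G$ has a PNE where each voter votes for her top candidate, and if condition (2) holds for some $X$, then $G$ has a PNE where each voter votes for her favorite candidate in $X$. The game $G$ has no other PNE with a winning set of size at least $2$.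
   Context: Let $C=\{c_1,\dots,c_m\}$ be candidates and $N=\{1,\dots,n\}$ voters; $[k]=\{1,\dots,k\}$. Each voter $i$ has an injective utility function $u_i:C\to\mathbb{N}$ inducing $c\succ_i c'$ iff $u_i(c)>u_i(c')$; $a_i$ is $i$'s top candidate. A ballot vector is $\mathbf{b}=(b_1,\dots,b_n)$ with $b_i\in C\cup\{\bot\}$ ($\bot$ = abstain); $(\mathbf{b}_{-i},b')$ replaces $b_i$ by $b'$. $\mathrm{sc}(c,\mathbf{b})=|\{i:b_i=c\}|$, the winning set $W(\mathbf{b})$ is the set of candidates with maximum score (equal to $C$ if all abstain). If $|W(\mathbf{b})|=1$ its element wins; otherwise under $R^C$ the winner is uniform on $W(\mathbf{b})$, and under $R^V$ a uniformly random voter $i\in N$ is chosen and the winner is $b_i$ if $b_i\in W(\mathbf{b})$, else $i$'s most preferred candidate in $W(\mathbf{b})$. Let $p_j(\mathbf{b})$ be the probability that $c_j$ wins. Fix $0<\varepsilon<\min\{1/m,1/n\}$. In the truth-biased setting $\mathcal{T}$, voter $i$'s utility is $U_i(\mathbf{b})=\sum_jp_j(\mathbf{b})u_i(c_j)$ if $b_i\in C\setminus\{a_i\}$, that plus $\varepsilon$ if $b_i=a_i$, and $-\infty$ if $b_i=\bot$. The game $(\mathcal{T},R,\mathbf{u})$ has players $N$ with action sets $C\cup\{\bot\}$; a PNE is a ballot vector $\mathbf{b}$ with $U_i(\mathbf{b})\ge U_i(\mathbf{b}_{-i},b')$ for all $i$ and all $b'$. *)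

theory Defs
  imports Complex_Main "HOL-Library.Extended_Real"
begin

(* Voters: finite type 'v (n = card (UNIV :: 'v set)); candidates: finite type 'c (m = card (UNIV :: 'c set)).
   Ballot: 'v => 'c option, None = abstain (bottom). *)

datatype rule = RC | RV

definition fav :: "('v \<Rightarrow> 'c \<Rightarrow> nat) \<Rightarrow> 'v \<Rightarrow> 'c set \<Rightarrow> 'c" where
  "fav u i X = (THE c. c \<in> X \<and> (\<forall>c'\<in>X. c' \<noteq> c \<longrightarrow> u i c' < u i c))"

definition top :: "('v \<Rightarrow> 'c \<Rightarrow> nat) \<Rightarrow> 'v \<Rightarrow> 'c" where
  "top u i = fav u i UNIV"

definition sc :: "('v::finite \<Rightarrow> 'c option) \<Rightarrow> 'c \<Rightarrow> nat" where
  "sc b c = card {i. b i = Some c}"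

definition W :: "('v::finite \<Rightarrow> 'c option) \<Rightarrow> 'c set" where
  "W b = {c. \<forall>c'. sc b c' \<le> sc b c}"

definition rv_outcome :: "('v::finite \<Rightarrow> 'c \<Rightarrow> nat) \<Rightarrow> ('v \<Rightarrow> 'c option) \<Rightarrow> 'v \<Rightarrow> 'c" where
  "rv_outcome u b i = (case b i of Some c \<Rightarrow> if c \<in> W b then c else fav u i (W b)
                                  | None \<Rightarrow> fav u i (W b))"

definition winprob :: "rule \<Rightarrow> ('v::finite \<Rightarrow> 'c::finite \<Rightarrow> nat) \<Rightarrow> ('v \<Rightarrow> 'c option) \<Rightarrow> 'c \<Rightarrow> real" where
  "winprob R u b c = (case R of
      RC \<Rightarrow> (if c \<in> W b then 1 / real (card (W b)) else 0)
    | RV \<Rightarrow> real (card {i. rv_outcome u b i = c}) / real (card (UNIV :: 'v set)))"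

definition EU :: "rule \<Rightarrow> ('v::finite \<Rightarrow> 'c::finite \<Rightarrow> nat) \<Rightarrow> ('v \<Rightarrow> 'c option) \<Rightarrow> 'v \<Rightarrow> real" where
  "EU R u b i = (\<Sum>c\<in>UNIV. winprob R u b c * real (u i c))"

definition TU :: "rule \<Rightarrow> real \<Rightarrow> ('v::finite \<Rightarrow> 'c::finite \<Rightarrow> nat) \<Rightarrow> ('v \<Rightarrow> 'c option) \<Rightarrow> 'v \<Rightarrow> ereal" where
  "TU R \<epsilon> u b i = (case b i of None \<Rightarrow> -\<infinity>
     | Some c \<Rightarrow> ereal (EU R u b i + (if c = top u i then \<epsilon> else 0)))"

definition PNE :: "rule \<Rightarrow> real \<Rightarrow> ('v::finite \<Rightarrow> 'c::finite \<Rightarrow> nat) \<Rightarrow> ('v \<Rightarrow> 'c option) \<Rightarrow> bool" where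
  "PNE R \<epsilon> u b = (\<forall>i b'. TU R \<epsilon> u (b(i := b')) i \<le> TU R \<epsilon> u b i)"

definition cond1 :: "('v::finite \<Rightarrow> 'c::finite \<Rightarrow> nat) \<Rightarrow> bool" where
  "cond1 u = ((\<forall>c. card {i. top u i = c} \<le> 1) \<and>
     (\<forall>l i. i \<noteq> l \<longrightarrow>
        (\<Sum>j\<in>UNIV. real (u l (top u j))) / real (card (UNIV :: 'v set)) \<ge> real (u l (top u i))))"

definition cond2 :: "('v::finite \<Rightarrow> 'c::finite \<Rightarrow> nat) \<Rightarrow> 'c set \<Rightarrow> bool" where
  "cond2 u X = (2 \<le> card X \<and> real (card X) \<le> min (real (card (UNIV :: 'v set)) / 2) (real (card (UNIV :: 'c set))) \<and>
     (\<exists>g :: 'v \<Rightarrow> 'c.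
        (\<forall>i. g i \<in> X) \<and>
        (\<forall>c\<in>X. real (card {i. g i = c}) = real (card (UNIV :: 'v set)) / real (card X)) \<and>
        (\<forall>i. \<forall>c\<in>X - {g i}. u i (g i) > u i c) \<and>
        (\<forall>i. \<forall>c\<in>X - {g i}.
           (\<Sum>d\<in>X. real (u i d)) / real (card X) \<ge> real (u i c))))"

end

theory Submission
  imports Defs
begin

text \<open>
  In an equilibrium with at least two winners nobody abstains, so every winner has a vote, and a
  voter not voting for her favourite winner could make it the unique winner, gaining at least
  \<open>1/n > \<epsilon>\<close>. So all voters vote for their favourite winner and all winners tie at a common score
  \<open>s\<close>. If \<open>s = 1\<close> the ballots are pairwise distinct and every voter must vote for her top
  candidate (switching to an unsupported top candidate raises the average and earns the bonus):
  this is condition (1). If \<open>s \<ge> 2\<close> the winning set is a set \<open>X\<close> as in condition (2). In both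
  cases the averaging inequality says that making another winner the unique one does not pay;
  as utilities are integers, the bonus \<open>\<epsilon> < 1/|W|\<close> does not affect it.
  Conversely, under (1) or (2) deviations to winners are ruled out by the averaging inequality,
  and deviations to losers lower the average by at least \<open>1/n\<close> or \<open>1/|X|\<close>, which exceeds \<open>\<epsilon>\<close>.
\<close>

lemma sum_UNIV_fibers:
  fixes g :: "'a::finite \<Rightarrow> 'b"
  assumes "finite T" "range g \<subseteq> T"
  shows "(\<Sum>j\<in>UNIV. h j) = (\<Sum>c\<in>T. \<Sum>j\<in>{j. g j = c}. h j)"
  using sum.group[of UNIV T g h] assms by simp

lemma sum_le_card_mult_max:
  fixes f :: "'a \<Rightarrow> nat"
  assumes "finite X" "a \<in> X" "\<And>c. c \<in> X \<Longrightarrow> c \<noteq> a \<Longrightarrow> f c < f a"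
  shows "(\<Sum>c\<in>X. real (f c)) \<le> real (card X) * real (f a) - (real (card X) - 1)"
proof -
  have "real (f c) \<le> real (f a) - 1" if "c \<in> X - {a}" for c
  proof -
    have "f c < f a" using assms(3) that by blast
    then have "real (f c) + 1 \<le> real (f a)" by (metis Suc_leI of_nat_Suc of_nat_le_iff add.commute)
    then show ?thesis by simp
  qed
  then have "(\<Sum>c\<in>X - {a}. real (f c)) \<le> real (card (X - {a})) * (real (f a) - 1)"
    by (rule sum_bounded_above)
  moreover have "(\<Sum>c\<in>X. real (f c)) = real (f a) + (\<Sum>c\<in>X - {a}. real (f c))"
    using assms(1,2) by (simp add: sum.remove)
  moreover have "0 < card X" using assms(1,2) card_gt_0_iff by blast
  then have "real (card (X - {a})) = real (card X) - 1"
    using assms(1,2) by (simp add: of_nat_diff)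
  ultimately show ?thesis by (simp add: algebra_simps)
qed

lemma le_mean_if_le_mean_plus_small:
  fixes a S k :: nat
  assumes "0 < k" "real k * e < 1" "real a \<le> real S / real k + e"
  shows "real a \<le> real S / real k"
proof -
  have "real (k * a) < real (S + 1)"
    using assms by (simp add: field_simps)
  then have "k * a \<le> S" by linarith
  then show ?thesis using assms(1) by (simp add: field_simps flip: of_nat_mult)
qed

lemma Diff_singleton_nonempty_if_card_ge_2: "2 \<le> card X \<Longrightarrow> X - {a} \<noteq> {}"
proof
  assume "2 \<le> card X" "X - {a} = {}"
  then have "card X \<le> card {a}" by (intro card_mono) auto
  with \<open>2 \<le> card X\<close> show False by simp
qed

lemma fav_eqI:
  assumes "x \<in> X" "\<And>c. c \<in> X \<Longrightarrow> c \<noteq> x \<Longrightarrow> u i c < u i x"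
  shows "fav u i X = x"
  unfolding fav_def
proof (rule the_equality)
  fix y assume "y \<in> X \<and> (\<forall>c\<in>X. c \<noteq> y \<longrightarrow> u i c < u i y)"
  then show "y = x" using assms by (metis less_asym)
qed (use assms in blast)

lemma fav_in_greatest:
  fixes u :: "'v \<Rightarrow> 'c::finite \<Rightarrow> nat"
  assumes "inj (u i)" "X \<noteq> {}"
  shows "fav u i X \<in> X \<and> (\<forall>c\<in>X. c \<noteq> fav u i X \<longrightarrow> u i c < u i (fav u i X))"
proof -
  have fin: "finite (u i ` X)" by simp
  obtain x where x: "x \<in> X" "u i x = Max (u i ` X)"
    using Max_in[OF fin] assms(2) by (metis empty_is_image imageE)
  have greatest: "u i c < u i x" if "c \<in> X" "c \<noteq> x" for c
  proof -
    have "u i c \<le> u i x" using x fin that by simp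
    moreover have "u i c \<noteq> u i x" using that(2) by (simp add: inj_eq[OF assms(1)])
    ultimately show ?thesis by simp
  qed
  then have "fav u i X = x" by (rule fav_eqI[OF x(1)])
  with x greatest show ?thesis by simp
qed

lemma fav_in:
  fixes u :: "'v \<Rightarrow> 'c::finite \<Rightarrow> nat"
  shows "inj (u i) \<Longrightarrow> X \<noteq> {} \<Longrightarrow> fav u i X \<in> X"
  using fav_in_greatest[of u i X] by blast

lemma fav_greatest:
  fixes u :: "'v \<Rightarrow> 'c::finite \<Rightarrow> nat"
  shows "inj (u i) \<Longrightarrow> c \<in> X \<Longrightarrow> c \<noteq> fav u i X \<Longrightarrow> u i c < u i (fav u i X)"
  using fav_in_greatest[of u i X] by blast

lemma top_greatest:
  fixes u :: "'v \<Rightarrow> 'c::finite \<Rightarrow> nat"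
  shows "inj (u i) \<Longrightarrow> c \<noteq> top u i \<Longrightarrow> u i c < u i (top u i)"
  unfolding top_def by (rule fav_greatest) auto

lemma fav_eq_top:
  fixes u :: "'v \<Rightarrow> 'c::finite \<Rightarrow> nat"
  shows "inj (u i) \<Longrightarrow> top u i \<in> X \<Longrightarrow> fav u i X = top u i"
  by (rule fav_eqI) (simp_all add: top_greatest)

lemma sc_Some: "sc (\<lambda>j. Some (g j)) c = card {j. g j = c}"
  unfolding sc_def by simp

lemma sc_fun_upd_same: "b i \<noteq> Some c \<Longrightarrow> sc (b(i := Some c)) c = Suc (sc b c)"
proof -
  assume "b i \<noteq> Some c"
  then have "{j. (b(i := Some c)) j = Some c} = insert i {j. b j = Some c}"
    and "i \<notin> {j. b j = Some c}" by auto
  then show ?thesis unfolding sc_def by simp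
qed

lemma sc_fun_upd_other:
  "d \<noteq> c \<Longrightarrow> sc (b(i := Some c)) d = (if b i = Some d then sc b d - 1 else sc b d)"
proof -
  assume "d \<noteq> c"
  then have "{j. (b(i := Some c)) j = Some d} = {j. b j = Some d} - {i}" by auto
  then show ?thesis unfolding sc_def by (simp add: card_Diff_singleton_if)
qed

lemma W_nonempty: "W (b :: 'v::finite \<Rightarrow> 'c::finite option) \<noteq> {}"
proof -
  have fin: "finite (range (sc b))" by simp
  obtain c where "sc b c = Max (range (sc b))"
    using Max_in[OF fin] by (metis UNIV_not_empty empty_is_image imageE)
  then have "c \<in> W b" unfolding W_def using fin by simp
  then show ?thesis by auto
qed

lemma sc_W_eq: "c \<in> W b \<Longrightarrow> d \<in> W b \<Longrightarrow> sc b c = sc b d"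
  unfolding W_def by (simp add: le_antisym)

lemma sc_le_W: "c \<in> W b \<Longrightarrow> sc b d \<le> sc b c"
  unfolding W_def by simp

lemma W_eqI:
  assumes "\<And>d. sc b d \<le> M" "\<And>x. x \<in> X \<longleftrightarrow> sc b x = M" "X \<noteq> {}"
  shows "W b = X"
proof -
  obtain x0 where "x0 \<in> X" using assms(3) by blast
  then have x0: "sc b x0 = M" using assms(2) by blast
  have "(\<forall>d. sc b d \<le> sc b x) \<longleftrightarrow> sc b x = M" for x
    using assms(1)[of x] assms(1) x0 by (metis le_antisym)
  then show ?thesis unfolding W_def using assms(2) by blast
qed

lemma W_fun_upd_winner:
  assumes "c \<in> W b" "b i \<noteq> Some c"
  shows "W (b(i := Some c)) = {c}"
proof (rule W_eqI)
  have lt: "sc (b(i := Some c)) d < Suc (sc b c)" if "d \<noteq> c" for d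
    using that sc_le_W[OF assms(1), of d] by (auto simp: sc_fun_upd_other)
  show "sc (b(i := Some c)) d \<le> Suc (sc b c)" for d
    using lt[of d] assms(2) by (cases "d = c") (auto simp: sc_fun_upd_same)
  show "x \<in> {c} \<longleftrightarrow> sc (b(i := Some c)) x = Suc (sc b c)" for x
    using lt[of x] assms(2) by (cases "x = c") (auto simp: sc_fun_upd_same)
qed simp

lemma W_fun_upd_loser:
  assumes a: "b i = Some a" "a \<in> W b" and c: "sc b c = 0"
    and s2: "\<forall>d\<in>W b. 2 \<le> sc b d" and W2: "2 \<le> card (W b)"
  shows "W (b(i := Some c)) = W b - {a}"
proof (rule W_eqI)
  define M where "M = sc b a"
  have M2: "2 \<le> M" using s2 a(2) by (simp add: M_def)
  have M: "sc b d = M \<longleftrightarrow> d \<in> W b" for d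
  proof
    assume "d \<in> W b" then show "sc b d = M" using sc_W_eq[OF _ a(2)] by (simp add: M_def)
  next
    assume "sc b d = M" then show "d \<in> W b" using a(2) unfolding W_def M_def by simp
  qed
  have "c \<notin> W b" using c M2 M by (metis not_numeral_le_zero)
  then have "c \<noteq> a" using a(2) by blast
  then have sc_c: "sc (b(i := Some c)) c = 1" using a(1) c by (simp add: sc_fun_upd_same)
  have sc_d: "sc (b(i := Some c)) d = (if d = a then M - 1 else sc b d)" if "d \<noteq> c" for d
    using that a(1) by (simp add: sc_fun_upd_other M_def)
  show "sc (b(i := Some c)) d \<le> M" for d
  proof (cases "d = c")
    case False
    then show ?thesis using sc_d[OF False] sc_le_W[OF a(2), of d] by (simp add: M_def)
  qed (use sc_c M2 in simp)
  show "x \<in> W b - {a} \<longleftrightarrow> sc (b(i := Some c)) x = M" for x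
  proof (cases "x = c")
    case False
    then show ?thesis using sc_d[OF False] M[of x] M2 by auto
  qed (use sc_c M2 \<open>c \<notin> W b\<close> in simp)
  show "W b - {a} \<noteq> {}" using W2 by (rule Diff_singleton_nonempty_if_card_ge_2)
qed

lemma W_injective:
  fixes g :: "'v::finite \<Rightarrow> 'c::finite"
  assumes "inj g"
  shows "W (\<lambda>j. Some (g j)) = range g"
proof -
  have "sc (\<lambda>j. Some (g j)) c = (if c \<in> range g then 1 else 0)" for c
  proof (cases "c \<in> range g")
    case True
    then obtain j where "{j'. g j' = c} = {j}" using assms by (auto dest: injD)
    then show ?thesis using True by (simp add: sc_Some)
  qed (auto simp: sc_Some)
  then show ?thesis unfolding W_def by (auto split: if_splits)
qed

lemma rv_outcome_in_W:
  fixes u :: "'v::finite \<Rightarrow> 'c::finite \<Rightarrow> nat"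
  shows "inj (u j) \<Longrightarrow> rv_outcome u b j \<in> W b"
  using fav_in[of u j "W b"] W_nonempty[of b]
  unfolding rv_outcome_def by (auto split: option.splits)

lemma fav_W_in_W:
  fixes u :: "'v \<Rightarrow> 'c::finite \<Rightarrow> nat" and b :: "'w::finite \<Rightarrow> 'c option"
  shows "inj (u j) \<Longrightarrow> fav u j (W b) \<in> W b"
  using fav_in[of u j "W b"] W_nonempty[of b] by blast

lemma favs_in_W:
  fixes u :: "'v \<Rightarrow> 'c::finite \<Rightarrow> nat" and b :: "'w::finite \<Rightarrow> 'c option"
  assumes "\<forall>j. inj (u j)" "\<forall>j. g j = fav u j (W b)"
  shows "\<forall>j. g j \<in> W b"
proof
  fix j show "g j \<in> W b" using fav_W_in_W[of u j b] assms by simp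
qed

lemma EU_RC:
  fixes u :: "'v::finite \<Rightarrow> 'c::finite \<Rightarrow> nat"
  shows "EU RC u b i = (\<Sum>c\<in>W b. real (u i c)) / real (card (W b))"
proof -
  have "EU RC u b i = (\<Sum>c\<in>UNIV. if c \<in> W b then real (u i c) / real (card (W b)) else 0)"
    unfolding EU_def winprob_def by (intro sum.cong) auto
  also have "\<dots> = (\<Sum>c\<in>W b. real (u i c) / real (card (W b)))"
    by (simp add: sum.If_cases)
  finally show ?thesis by (simp add: sum_divide_distrib)
qed

lemma EU_RV:
  fixes u :: "'v::finite \<Rightarrow> 'c::finite \<Rightarrow> nat"
  shows "EU RV u b i = (\<Sum>j\<in>UNIV. real (u i (rv_outcome u b j))) / real (card (UNIV :: 'v set))"
proof -
  have "(\<Sum>j\<in>UNIV. real (u i (rv_outcome u b j)))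
      = (\<Sum>c\<in>UNIV. \<Sum>j\<in>{j. rv_outcome u b j = c}. real (u i (rv_outcome u b j)))"
    by (rule sum_UNIV_fibers) auto
  also have "\<dots> = (\<Sum>c\<in>UNIV. real (card {j. rv_outcome u b j = c}) * real (u i c))"
    by (rule sum.cong) auto
  finally show ?thesis unfolding EU_def winprob_def by (simp add: sum_divide_distrib)
qed

lemma EU_singleton:
  fixes u :: "'v::finite \<Rightarrow> 'c::finite \<Rightarrow> nat"
  assumes "W b = {c}"
  shows "EU R u b i = real (u i c)"
proof (cases R)
  case RC
  then show ?thesis using assms by (simp add: EU_RC)
next
  case RV
  have "rv_outcome u b j = c" for j
    using assms unfolding rv_outcome_def by (auto split: option.splits intro!: fav_eqI)
  then show ?thesis using RV by (simp add: EU_RV)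
qed

text \<open>In a profile where every ballot goes to a winner, all winners share the same score \<open>s\<close>,
  so \<open>n = s k\<close> and averaging over voters is the same as averaging over winners.\<close>

lemma card_UNIV_eq_sc_mult_card_W:
  fixes b :: "'v::finite \<Rightarrow> 'c::finite option"
  assumes "\<forall>j. \<exists>d\<in>W b. b j = Some d" "c \<in> W b"
  shows "card (UNIV :: 'v set) = sc b c * card (W b)"
proof -
  have "UNIV = (\<Union>d\<in>W b. {j. b j = Some d})" using assms(1) by auto
  moreover have "card (\<Union>d\<in>W b. {j. b j = Some d}) = (\<Sum>d\<in>W b. sc b d)"
    unfolding sc_def by (rule card_UN_disjoint) auto
  ultimately have "card (UNIV :: 'v set) = (\<Sum>d\<in>W b. sc b d)" by simp
  also have "\<dots> = (\<Sum>d\<in>W b. sc b c)"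
    using sc_W_eq assms(2) by (intro sum.cong) auto
  finally show ?thesis by simp
qed

lemma mean_votes_eq_mean_W:
  fixes g :: "'v::finite \<Rightarrow> 'c::finite" and f :: "'c \<Rightarrow> nat"
  assumes b: "b = (\<lambda>j. Some (g j))" and gW: "\<forall>j. g j \<in> W b"
  shows "(\<Sum>j\<in>UNIV. real (f (g j))) / real (card (UNIV :: 'v set))
       = (\<Sum>c\<in>W b. real (f c)) / real (card (W b))"
proof -
  obtain c0 where c0: "c0 \<in> W b" using W_nonempty[of b] by auto
  define s where "s = sc b c0"
  have fiber: "card {j. g j = c} = s" if "c \<in> W b" for c
    using sc_W_eq[OF that c0] b by (simp add: s_def sc_Some)
  have "(\<Sum>j\<in>UNIV. real (f (g j))) = (\<Sum>c\<in>W b. \<Sum>j\<in>{j. g j = c}. real (f (g j)))"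
    by (rule sum_UNIV_fibers) (use gW in auto)
  also have "\<dots> = real s * (\<Sum>c\<in>W b. real (f c))"
    by (simp add: fiber sum_distrib_left)
  finally have "(\<Sum>j\<in>UNIV. real (f (g j))) = real s * (\<Sum>c\<in>W b. real (f c))" .
  moreover have "card (UNIV :: 'v set) = s * card (W b)"
    unfolding s_def using b gW c0 by (intro card_UNIV_eq_sc_mult_card_W) auto
  moreover have "s \<noteq> 0"
    using calculation(2) card_gt_0_iff[of "UNIV :: 'v set"] by auto
  ultimately show ?thesis by simp
qed

lemma EU_tied:
  fixes u :: "'v::finite \<Rightarrow> 'c::finite \<Rightarrow> nat"
  assumes b: "b = (\<lambda>j. Some (g j))" and gW: "\<forall>j. g j \<in> W b"
  shows "EU R u b i = (\<Sum>j\<in>UNIV. real (u i (g j))) / real (card (UNIV :: 'v set))"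
proof (cases R)
  case RC
  then show ?thesis using mean_votes_eq_mean_W[OF b gW] by (simp add: EU_RC)
next
  case RV
  have "rv_outcome u b j = g j" for j
    using gW b unfolding rv_outcome_def by simp
  then show ?thesis using RV by (simp add: EU_RV)
qed

lemma EU_tied_W:
  fixes u :: "'v::finite \<Rightarrow> 'c::finite \<Rightarrow> nat"
  assumes b: "b = (\<lambda>j. Some (g j))" and gW: "\<forall>j. g j \<in> W b"
  shows "EU R u b i = (\<Sum>c\<in>W b. real (u i c)) / real (card (W b))"
  using EU_tied[OF assms] mean_votes_eq_mean_W[OF assms] by simp

lemma EU_injective:
  fixes u :: "'v::finite \<Rightarrow> 'c::finite \<Rightarrow> nat"
  assumes "inj g"
  shows "EU R u (\<lambda>j. Some (g j)) i = (\<Sum>j\<in>UNIV. real (u i (g j))) / real (card (UNIV :: 'v set))"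
  using W_injective[OF assms] by (intro EU_tied) auto

lemma EU_injective_fun_upd:
  fixes u :: "'v::finite \<Rightarrow> 'c::finite \<Rightarrow> nat"
  assumes ginj: "inj g" and c: "c \<notin> range g"
  shows "EU R u ((\<lambda>j. Some (g j))(i := Some c)) i
       = EU R u (\<lambda>j. Some (g j)) i + (real (u i c) - real (u i (g i))) / real (card (UNIV :: 'v set))"
proof -
  define g' where "g' = g(i := c)"
  have b': "(\<lambda>j. Some (g j))(i := Some c) = (\<lambda>j. Some (g' j))" by (auto simp: g'_def)
  have "inj g'" using inj_on_fun_updI[OF ginj c] by (simp add: g'_def)
  have "(\<Sum>j\<in>UNIV - {i}. real (u i (g' j))) = (\<Sum>j\<in>UNIV - {i}. real (u i (g j)))"
    by (rule sum.cong) (auto simp: g'_def)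
  then have "(\<Sum>j\<in>UNIV. real (u i (g' j))) = real (u i c) + (\<Sum>j\<in>UNIV - {i}. real (u i (g j)))"
    by (simp add: sum.remove[of UNIV i] g'_def)
  moreover have "(\<Sum>j\<in>UNIV. real (u i (g j))) = real (u i (g i)) + (\<Sum>j\<in>UNIV - {i}. real (u i (g j)))"
    by (simp add: sum.remove[of UNIV i])
  ultimately show ?thesis
    unfolding b' EU_injective[OF ginj] EU_injective[OF \<open>inj g'\<close>]
    by (simp add: diff_divide_distrib add_divide_distrib)
qed

lemma EU_RC_fun_upd_loser:
  fixes u :: "'v::finite \<Rightarrow> 'c::finite \<Rightarrow> nat"
  assumes inj: "inj (u i)" and W2: "2 \<le> card (W b)" and W': "W b' = W b - {fav u i (W b)}"
  shows "EU RC u b' i + 1 / real (card (W b)) \<le> EU RC u b i"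
proof -
  define a where "a = fav u i (W b)"
  define k where "k = real (card (W b))"
  define S where "S = (\<Sum>d\<in>W b. real (u i d))"
  have a: "a \<in> W b" using fav_W_in_W[of u i b] inj by (simp add: a_def)
  have S: "S \<le> k * real (u i a) - (k - 1)"
    unfolding S_def k_def
    by (rule sum_le_card_mult_max[OF _ a]) (use fav_greatest[of u i] inj in \<open>auto simp: a_def\<close>)
  have k: "2 \<le> k" using W2 by (simp add: k_def)
  have "EU RC u b' i = (S - real (u i a)) / (k - 1)"
    using W' a W2 by (simp add: EU_RC S_def k_def a_def sum_diff1 of_nat_diff)
  also have "\<dots> = (k * S - k * real (u i a)) / (k * (k - 1))"
    using k by (simp add: field_simps)
  also have "\<dots> \<le> ((k - 1) * S - (k - 1)) / (k * (k - 1))"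
    using S k by (intro divide_right_mono) (auto simp: algebra_simps)
  also have "\<dots> = S / k - 1 / k"
    using k by (simp add: field_simps)
  also have "\<dots> = EU RC u b i - 1 / k" by (simp add: EU_RC S_def k_def)
  finally show ?thesis by (simp add: k_def)
qed

lemma EU_RV_fun_upd_loser:
  fixes u :: "'v::finite \<Rightarrow> 'c::finite \<Rightarrow> nat"
  assumes inj: "\<forall>j. inj (u j)" and b: "b = (\<lambda>j. Some (g j))" and gW: "\<forall>j. g j \<in> W b"
    and gi: "g i = fav u i (W b)" and W': "W (b(i := Some c)) = W b - {g i}"
  shows "EU RV u (b(i := Some c)) i + 1 / real (card (UNIV :: 'v set)) \<le> EU RV u b i"
proof -
  define out where "out j = rv_outcome u (b(i := Some c)) j" for j
  have out: "out j \<in> W b - {g i}" for j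
    using rv_outcome_in_W[of u j "b(i := Some c)"] inj W' by (simp add: out_def)
  have greatest: "u i d < u i (g i)" if "d \<in> W b - {g i}" for d
    using fav_greatest[of u i d "W b"] inj gi that by simp
  \<comment> \<open>Voters other than \<open>i\<close> keep their choice unless it was \<open>g i\<close>, which is \<open>i\<close>'s best winner.\<close>
  have "u i (out j) \<le> u i (g j)" for j
  proof (cases "g j = g i")
    case True
    then show ?thesis using greatest[OF out[of j]] by simp
  next
    case False
    then have "j \<noteq> i" by blast
    then have "out j = g j" using False gW W' b by (simp add: out_def rv_outcome_def)
    then show ?thesis by simp
  qed
  then have "(\<Sum>j\<in>UNIV. u i (out j)) < (\<Sum>j\<in>UNIV. u i (g j))"
    using greatest[OF out[of i]] by (intro sum_strict_mono_ex1) auto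
  then have "(\<Sum>j\<in>UNIV. real (u i (out j))) + 1 \<le> (\<Sum>j\<in>UNIV. real (u i (g j)))"
    by (simp flip: of_nat_sum add: of_nat_less_iff[symmetric])
  moreover have "rv_outcome u b j = g j" for j using gW b by (simp add: rv_outcome_def)
  ultimately show ?thesis
    by (simp add: EU_RV out_def card_gt_0_iff add_divide_distrib[symmetric] divide_right_mono)
qed

lemma TU_Some: "b i = Some c \<Longrightarrow> TU R \<epsilon> u b i = ereal (EU R u b i + (if c = top u i then \<epsilon> else 0))"
  unfolding TU_def by simp

lemma TU_fun_upd_winner:
  fixes u :: "'v::finite \<Rightarrow> 'c::finite \<Rightarrow> nat"
  assumes "c \<in> W b" "b i \<noteq> Some c"
  shows "TU R \<epsilon> u (b(i := Some c)) i = ereal (real (u i c) + (if c = top u i then \<epsilon> else 0))"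
  using EU_singleton[OF W_fun_upd_winner[OF assms]] by (simp add: TU_Some)

lemma sc_W_pos:
  assumes "b i = Some c" "d \<in> W b"
  shows "0 < sc b d"
proof -
  have "0 < sc b c" using assms(1) unfolding sc_def by (auto simp: card_gt_0_iff)
  also have "\<dots> \<le> sc b d" using assms(2) by (rule sc_le_W)
  finally show ?thesis .
qed

lemma EU_le_fav_minus:
  fixes u :: "'v::finite \<Rightarrow> 'c::finite \<Rightarrow> nat"
  assumes inj: "\<forall>j. inj (u j)" and n2: "2 \<le> card (UNIV :: 'v set)" and W2: "2 \<le> card (W b)"
    and pos: "\<forall>c\<in>W b. 0 < sc b c"
  shows "EU R u b i \<le> real (u i (fav u i (W b))) - 1 / real (card (UNIV :: 'v set))"
proof -
  define f where "f = fav u i (W b)"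
  define n where "n = real (card (UNIV :: 'v set))"
  have f: "f \<in> W b" using fav_W_in_W[of u i b] inj by (simp add: f_def)
  have greatest: "\<And>c. c \<in> W b \<Longrightarrow> c \<noteq> f \<Longrightarrow> u i c < u i f"
    using fav_greatest[of u i] inj by (simp add: f_def)
  show ?thesis
  proof (cases R)
    case RC
    define k where "k = real (card (W b))"
    have "EU R u b i \<le> (k * real (u i f) - (k - 1)) / k"
      using RC sum_le_card_mult_max[of "W b" f "u i", OF _ f greatest]
      by (simp add: EU_RC k_def divide_right_mono)
    also have "\<dots> = real (u i f) - 1 + 1 / k"
      using W2 W_nonempty[of b] by (simp add: k_def diff_divide_distrib)
    also have "\<dots> \<le> real (u i f) - 1 / 2" using W2 by (simp add: k_def field_simps)
    also have "\<dots> \<le> real (u i f) - 1 / n" using n2 by (simp add: n_def field_simps)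
    finally show ?thesis by (simp add: f_def n_def)
  next
    case RV
    obtain x where x: "x \<in> W b" "x \<noteq> f"
      using Diff_singleton_nonempty_if_card_ge_2[OF W2, of f] by blast
    then have "{j. b j = Some x} \<noteq> {}" using pos unfolding sc_def by force
    then obtain j0 where j0: "b j0 = Some x" by blast
    have "rv_outcome u b j0 = x" using j0 x unfolding rv_outcome_def by simp
    moreover have "u i (rv_outcome u b j) \<le> u i f" for j
      using rv_outcome_in_W[of u j b] inj greatest[of "rv_outcome u b j"]
      by (cases "rv_outcome u b j = f") auto
    ultimately have "(\<Sum>j\<in>UNIV. u i (rv_outcome u b j)) < (\<Sum>j\<in>(UNIV :: 'v set). u i f)"
      using greatest[OF x] by (intro sum_strict_mono_ex1) auto
    then have "(\<Sum>j\<in>UNIV. real (u i (rv_outcome u b j))) \<le> n * real (u i f) - 1"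
      unfolding n_def by (simp flip: of_nat_sum of_nat_mult add: of_nat_less_iff[symmetric])
    moreover have "0 < n" by (simp add: n_def card_gt_0_iff)
    ultimately show ?thesis using RV by (simp add: EU_RV f_def n_def[symmetric] field_simps)
  qed
qed

lemma PNE_no_abstention: "PNE R \<epsilon> u b \<Longrightarrow> b i \<noteq> None"
proof
  assume P: "PNE R \<epsilon> u b" and "b i = None"
  then have "TU R \<epsilon> u b i = -\<infinity>" by (simp add: TU_def)
  moreover have "TU R \<epsilon> u (b(i := Some undefined)) i \<le> TU R \<epsilon> u b i"
    using P unfolding PNE_def by blast
  ultimately show False by (simp add: TU_def)
qed

lemma PNE_votes_fav:
  fixes u :: "'v::finite \<Rightarrow> 'c::finite \<Rightarrow> nat"
  assumes inj: "\<forall>j. inj (u j)" and n2: "2 \<le> card (UNIV :: 'v set)"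
    and eps: "0 < \<epsilon>" "\<epsilon> < 1 / real (card (UNIV :: 'v set))"
    and P: "PNE R \<epsilon> u b" and W2: "2 \<le> card (W b)"
  shows "b i = Some (fav u i (W b))"
proof (rule ccontr)
  define f where "f = fav u i (W b)"
  assume "b i \<noteq> Some (fav u i (W b))"
  then have ne: "b i \<noteq> Some f" by (simp add: f_def)
  obtain x where x: "b i = Some x" using PNE_no_abstention[OF P] by blast
  have f: "f \<in> W b" using fav_W_in_W[of u i b] inj by (simp add: f_def)
  have "ereal (real (u i f)) \<le> TU R \<epsilon> u (b(i := Some f)) i"
    using eps(1) by (simp add: TU_fun_upd_winner[OF f ne])
  also have "\<dots> \<le> TU R \<epsilon> u b i" using P by (simp add: PNE_def)
  also have "\<dots> \<le> ereal (EU R u b i + \<epsilon>)" using eps(1) by (simp add: TU_Some[where b=b and i=i, OF x])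
  finally have "real (u i f) \<le> EU R u b i + \<epsilon>" by simp
  moreover have "EU R u b i \<le> real (u i f) - 1 / real (card (UNIV :: 'v set))"
    using EU_le_fav_minus[OF inj n2 W2] sc_W_pos[where b=b and i=i, OF x] by (simp add: f_def)
  ultimately show False using eps(2) by simp
qed

lemma PNE_le_mean_W:
  fixes u :: "'v::finite \<Rightarrow> 'c::finite \<Rightarrow> nat"
  assumes inj: "\<forall>j. inj (u j)"
    and eps: "0 < \<epsilon>" "\<epsilon> < 1 / real (card (UNIV :: 'c set))"
    and P: "PNE R \<epsilon> u b" and b: "b = (\<lambda>j. Some (g j))" and gfav: "\<forall>j. g j = fav u j (W b)"
    and c: "c \<in> W b" "c \<noteq> g i"
  shows "real (u i c) \<le> (\<Sum>d\<in>W b. real (u i d)) / real (card (W b))"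
proof -
  have gW: "\<forall>j. g j \<in> W b" using favs_in_W[OF inj gfav] .
  have "c \<noteq> top u i" using c gfav fav_eq_top[of u i "W b"] inj by auto
  then have "ereal (real (u i c)) = TU R \<epsilon> u (b(i := Some c)) i"
    using c b by (simp add: TU_fun_upd_winner)
  also have "\<dots> \<le> TU R \<epsilon> u b i" using P by (simp add: PNE_def)
  also have "\<dots> \<le> ereal (EU R u b i + \<epsilon>)" using eps(1) b by (simp add: TU_Some)
  finally have "real (u i c) \<le> real (\<Sum>d\<in>W b. u i d) / real (card (W b)) + \<epsilon>"
    using EU_tied_W[OF b gW] by simp
  moreover have "real (card (W b)) * \<epsilon> < 1"
  proof -
    have "real (card (W b)) * \<epsilon> \<le> real (card (UNIV :: 'c set)) * \<epsilon>"
      using eps(1) by (intro mult_right_mono) (auto intro: card_mono)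
    also have "\<dots> < 1" using eps(2) by (simp add: field_simps card_gt_0_iff)
    finally show ?thesis .
  qed
  ultimately show ?thesis
    using le_mean_if_le_mean_plus_small[of "card (W b)" \<epsilon> "u i c" "\<Sum>d\<in>W b. u i d"] W_nonempty[of b]
    by (simp add: card_gt_0_iff)
qed

lemma PNE_injective_votes_top:
  fixes u :: "'v::finite \<Rightarrow> 'c::finite \<Rightarrow> nat"
  assumes inj: "\<forall>j. inj (u j)" and eps: "0 < \<epsilon>"
    and P: "PNE R \<epsilon> u b" and b: "b = (\<lambda>j. Some (g j))" and gfav: "\<forall>j. g j = fav u j (W b)"
    and ginj: "inj g"
  shows "g i = top u i"
proof (rule ccontr)
  define t where "t = top u i"
  assume ne: "g i \<noteq> top u i"
  have Wb: "W b = range g" using W_injective[OF ginj] b by simp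
  have t: "t \<notin> range g"
  proof
    assume "t \<in> range g"
    then have "fav u i (W b) = t" using fav_eq_top[of u i "W b"] inj Wb by (simp add: t_def)
    then show False using ne gfav by (simp add: t_def)
  qed
  have "u i (g i) < u i t" using top_greatest[of u i "g i"] inj ne by (simp add: t_def)
  then have "EU R u b i < EU R u (b(i := Some t)) i"
    using EU_injective_fun_upd[OF ginj t, of R u i] b by (simp add: card_gt_0_iff)
  moreover have "TU R \<epsilon> u (b(i := Some t)) i \<le> TU R \<epsilon> u b i" using P by (simp add: PNE_def)
  ultimately show False using ne eps b by (simp add: TU_Some t_def)
qed

lemma cond1_if_PNE_injective:
  fixes u :: "'v::finite \<Rightarrow> 'c::finite \<Rightarrow> nat"
  assumes inj: "\<forall>j. inj (u j)"
    and eps: "0 < \<epsilon>" "\<epsilon> < 1 / real (card (UNIV :: 'c set))"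
    and P: "PNE R \<epsilon> u b" and b: "b = (\<lambda>j. Some (g j))" and gfav: "\<forall>j. g j = fav u j (W b)"
    and ginj: "inj g"
  shows "cond1 u \<and> b = (\<lambda>i. Some (top u i))"
proof -
  have g: "g = top u" using PNE_injective_votes_top[OF inj eps(1) P b gfav ginj] by (rule ext)
  have gW: "\<forall>j. g j \<in> W b" using W_injective[OF ginj] b by simp
  have "real (u l (top u i)) \<le> (\<Sum>j\<in>UNIV. real (u l (top u j))) / real (card (UNIV :: 'v set))"
    if "i \<noteq> l" for l i
    using PNE_le_mean_W[OF inj eps P b gfav, of "g i" l] gW ginj that
      mean_votes_eq_mean_W[OF b gW, of "u l"]
    by (simp add: g inj_eq)
  moreover have "card {i. top u i = c} \<le> 1" for c
    using ginj unfolding g by (auto simp: card_le_Suc0_iff_eq dest: injD)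
  ultimately show ?thesis using b g by (simp add: cond1_def)
qed

lemma cond2_if_PNE:
  fixes u :: "'v::finite \<Rightarrow> 'c::finite \<Rightarrow> nat"
  assumes inj: "\<forall>j. inj (u j)"
    and eps: "0 < \<epsilon>" "\<epsilon> < 1 / real (card (UNIV :: 'c set))"
    and P: "PNE R \<epsilon> u b" and b: "b = (\<lambda>j. Some (g j))" and gfav: "\<forall>j. g j = fav u j (W b)"
    and W2: "2 \<le> card (W b)" and s2: "\<forall>c\<in>W b. 2 \<le> sc b c"
  shows "cond2 u (W b)"
  unfolding cond2_def
proof (intro conjI exI[of _ g] allI ballI)
  have gW: "\<forall>j. g j \<in> W b" using favs_in_W[OF inj gfav] .
  then have n: "card (UNIV :: 'v set) = sc b c * card (W b)" if "c \<in> W b" for c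
    using b that by (intro card_UNIV_eq_sc_mult_card_W) auto
  obtain c0 where c0: "c0 \<in> W b" using W_nonempty[of b] by auto
  have "2 * card (W b) \<le> card (UNIV :: 'v set)" using n[OF c0] s2 c0 by simp
  moreover have "card (W b) \<le> card (UNIV :: 'c set)" by (rule card_mono) auto
  ultimately show "real (card (W b))
      \<le> min (real (card (UNIV :: 'v set)) / 2) (real (card (UNIV :: 'c set)))"
    by simp
  show "g i \<in> W b" for i using gW by blast
  show "real (card {i. g i = c}) = real (card (UNIV :: 'v set)) / real (card (W b))"
    if "c \<in> W b" for c
    using n[OF that] W2 b W_nonempty[of b] by (simp add: sc_Some)
  show "u i (g i) > u i c" if "c \<in> W b - {g i}" for i c
    using fav_greatest[of u i c "W b"] inj gfav that by simp
  show "(\<Sum>d\<in>W b. real (u i d)) / real (card (W b)) \<ge> real (u i c)" if "c \<in> W b - {g i}" for i c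
    using PNE_le_mean_W[OF inj eps P b gfav] that by blast
qed (use W2 in simp)

lemma PNE_cond1_or_cond2:
  fixes u :: "'v::finite \<Rightarrow> 'c::finite \<Rightarrow> nat"
  assumes inj: "\<forall>j. inj (u j)" and n2: "2 \<le> card (UNIV :: 'v set)"
    and eps: "0 < \<epsilon>" "\<epsilon> < 1 / real (card (UNIV :: 'c set))" "\<epsilon> < 1 / real (card (UNIV :: 'v set))"
    and P: "PNE R \<epsilon> u b" and W2: "2 \<le> card (W b)"
  shows "(cond1 u \<and> b = (\<lambda>i. Some (top u i))) \<or> (\<exists>X. cond2 u X \<and> b = (\<lambda>i. Some (fav u i X)))"
proof -
  define g where "g i = fav u i (W b)" for i
  have b: "b = (\<lambda>j. Some (g j))" using PNE_votes_fav[OF inj n2 eps(1,3) P W2] by (auto simp: g_def)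
  have gfav: "\<forall>j. g j = fav u j (W b)" by (simp add: g_def)
  have gW: "g j \<in> W b" for j using fav_W_in_W[of u j b] inj by (simp add: g_def)
  obtain c0 where c0: "c0 \<in> W b" using W_nonempty[of b] by auto
  have sc_eq: "sc b c = sc b c0" if "c \<in> W b" for c using sc_W_eq[OF that c0] .
  have "0 < sc b c0" using sc_W_pos[of b undefined] c0 b by simp
  then consider "sc b c0 = 1" | "2 \<le> sc b c0" by linarith
  then show ?thesis
  proof cases
    case 1
    have "inj g"
    proof (rule injI)
      fix j j' assume "g j = g j'"
      moreover have "card {k. g k = g j} = 1" using sc_eq[OF gW] 1 b by (simp add: sc_Some)
      ultimately obtain k where "{k. g k = g j'} = {k}" by (auto simp: card_1_singleton_iff)
      then show "j = j'" using \<open>g j = g j'\<close> by (auto simp: set_eq_iff)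
    qed
    then show ?thesis using cond1_if_PNE_injective[OF inj eps(1,2) P b gfav] by blast
  next
    case 2
    then have "cond2 u (W b)" using cond2_if_PNE[OF inj eps(1,2) P b gfav W2] sc_eq by simp
    then show ?thesis using b unfolding g_def by blast
  qed
qed

lemma PNE_tiedI:
  fixes u :: "'v::finite \<Rightarrow> 'c::finite \<Rightarrow> nat"
  assumes inj: "\<forall>j. inj (u j)" and eps: "0 \<le> \<epsilon>"
    and b: "b = (\<lambda>j. Some (g j))" and gfav: "\<forall>j. g j = fav u j (W b)"
    and mean: "\<And>i c. c \<in> W b - {g i} \<Longrightarrow> real (u i c) \<le> (\<Sum>d\<in>W b. real (u i d)) / real (card (W b))"
    and loser: "\<And>i c. c \<notin> W b \<Longrightarrow> TU R \<epsilon> u (b(i := Some c)) i \<le> TU R \<epsilon> u b i"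
  shows "PNE R \<epsilon> u b"
  unfolding PNE_def
proof (intro allI)
  fix i b'
  have gW: "\<forall>j. g j \<in> W b" using favs_in_W[OF inj gfav] .
  have EU_le_TU: "ereal (EU R u b i) \<le> TU R \<epsilon> u b i" using eps b by (simp add: TU_Some)
  consider "b' = None" | "b' = Some (g i)" | c where "b' = Some c" "c \<in> W b - {g i}"
    | c where "b' = Some c" "c \<notin> W b" by blast
  then show "TU R \<epsilon> u (b(i := b')) i \<le> TU R \<epsilon> u b i"
  proof cases
    case 1
    then show ?thesis by (simp add: TU_def)
  next
    case 2
    then show ?thesis using b by (simp add: fun_upd_idem)
  next
    case (3 c)
    have "c \<noteq> top u i" using 3 gfav fav_eq_top[of u i "W b"] inj by auto
    moreover have "b i \<noteq> Some c" using 3 b by auto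
    ultimately have "TU R \<epsilon> u (b(i := b')) i = ereal (real (u i c))"
      using TU_fun_upd_winner[where c=c and b=b and i=i] 3 by simp
    also have "\<dots> \<le> ereal (EU R u b i)" using mean[OF 3(2)] EU_tied_W[OF b gW] by simp
    finally show ?thesis using EU_le_TU by simp
  qed (use loser in simp)
qed

lemma PNE_top_if_cond1:
  fixes u :: "'v::finite \<Rightarrow> 'c::finite \<Rightarrow> nat"
  assumes inj: "\<forall>j. inj (u j)" and n2: "2 \<le> card (UNIV :: 'v set)" and eps: "0 < \<epsilon>"
    and c1: "cond1 u"
  shows "PNE R \<epsilon> u (\<lambda>i. Some (top u i)) \<and> 2 \<le> card (W (\<lambda>i. Some (top u i)))"
proof
  define b where "b = (\<lambda>i. Some (top u i))"
  have "inj (top u)"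
  proof (rule injI)
    fix j j' assume "top u j = top u j'"
    moreover have "card {k. top u k = top u j} \<le> Suc 0" using c1 by (simp add: cond1_def)
    ultimately show "j = j'" by (subst (asm) card_le_Suc0_iff_eq) auto
  qed
  then have Wb: "W b = range (top u)" by (simp add: b_def W_injective)
  show "2 \<le> card (W (\<lambda>i. Some (top u i)))"
    using Wb n2 \<open>inj (top u)\<close> by (simp add: b_def card_image)
  show "PNE R \<epsilon> u b"
  proof (rule PNE_tiedI[OF inj _ b_def])
    show "\<forall>j. top u j = fav u j (W b)"
    proof
      fix j show "top u j = fav u j (W b)" using fav_eq_top[of u j "W b"] inj Wb by simp
    qed
    show "real (u i c) \<le> (\<Sum>d\<in>W b. real (u i d)) / real (card (W b))"
      if c: "c \<in> W b - {top u i}" for i c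
    proof -
      obtain l where l: "c = top u l" "l \<noteq> i" using c Wb by auto
      have "real (u i c) \<le> (\<Sum>j\<in>UNIV. real (u i (top u j))) / real (card (UNIV :: 'v set))"
        using c1 l unfolding cond1_def by auto
      also have "\<dots> = (\<Sum>d\<in>W b. real (u i d)) / real (card (W b))"
        using Wb by (intro mean_votes_eq_mean_W) (auto simp: b_def)
      finally show ?thesis .
    qed
    show "TU R \<epsilon> u (b(i := Some c)) i \<le> TU R \<epsilon> u b i" if "c \<notin> W b" for i c
    proof -
      have "c \<noteq> top u i" using that Wb by auto
      then have "u i c < u i (top u i)" using top_greatest[of u i c] inj by simp
      then have "EU R u (b(i := Some c)) i \<le> EU R u b i"
        using EU_injective_fun_upd[OF \<open>inj (top u)\<close>, of c R u i] that Wb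
        by (simp add: b_def divide_nonpos_pos card_gt_0_iff)
      then show ?thesis using \<open>c \<noteq> top u i\<close> eps by (simp add: b_def TU_Some)
    qed
  qed (use eps in simp)
qed

lemma EU_fun_upd_loser:
  fixes u :: "'v::finite \<Rightarrow> 'c::finite \<Rightarrow> nat"
  assumes inj: "\<forall>j. inj (u j)"
    and eps: "\<epsilon> < 1 / real (card (UNIV :: 'c set))" "\<epsilon> < 1 / real (card (UNIV :: 'v set))"
    and b: "b = (\<lambda>j. Some (g j))" and gfav: "\<forall>j. g j = fav u j (W b)"
    and W2: "2 \<le> card (W b)" and s2: "\<forall>d\<in>W b. 2 \<le> sc b d" and c: "sc b c = 0"
  shows "EU R u (b(i := Some c)) i + \<epsilon> \<le> EU R u b i"
proof -
  have gW: "\<forall>j. g j \<in> W b" using favs_in_W[OF inj gfav] .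
  have W': "W (b(i := Some c)) = W b - {g i}"
    using b gW by (intro W_fun_upd_loser[OF _ _ c s2 W2]) auto
  show ?thesis
  proof (cases R)
    case RC
    have "\<epsilon> \<le> 1 / real (card (W b))"
    proof -
      have "card (W b) \<le> card (UNIV :: 'c set)" by (rule card_mono) auto
      then have "1 / real (card (UNIV :: 'c set)) \<le> 1 / real (card (W b))"
        using W2 by (simp add: frac_le)
      then show ?thesis using eps(1) by simp
    qed
    moreover have "EU RC u (b(i := Some c)) i + 1 / real (card (W b)) \<le> EU RC u b i"
      using EU_RC_fun_upd_loser[where b'="b(i := Some c)"] inj W2 W' gfav by simp
    ultimately show ?thesis using RC by simp
  next
    case RV
    then show ?thesis using EU_RV_fun_upd_loser[OF inj b gW _ W'] gfav eps(2) by simp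
  qed
qed

lemma PNE_fav_if_cond2:
  fixes u :: "'v::finite \<Rightarrow> 'c::finite \<Rightarrow> nat"
  assumes inj: "\<forall>j. inj (u j)"
    and eps: "0 < \<epsilon>" "\<epsilon> < 1 / real (card (UNIV :: 'c set))" "\<epsilon> < 1 / real (card (UNIV :: 'v set))"
    and c2: "cond2 u X"
  shows "PNE R \<epsilon> u (\<lambda>i. Some (fav u i X)) \<and> 2 \<le> card (W (\<lambda>i. Some (fav u i X)))"
proof -
  define b where "b = (\<lambda>i. Some (fav u i X))"
  define n where "n = real (card (UNIV :: 'v set))"
  from c2 obtain g where X2: "2 \<le> card X" and Xn: "real (card X) \<le> n / 2"
    and gX: "\<forall>i. g i \<in> X" and fiber: "\<forall>c\<in>X. real (card {i. g i = c}) = n / real (card X)"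
    and gmax: "\<forall>i. \<forall>c\<in>X - {g i}. u i c < u i (g i)"
    and gmean: "\<forall>i. \<forall>c\<in>X - {g i}. real (u i c) \<le> (\<Sum>d\<in>X. real (u i d)) / real (card X)"
    unfolding cond2_def n_def by auto
  have "fav u i X = g i" for i by (rule fav_eqI) (use gX gmax in auto)
  then have b: "b = (\<lambda>j. Some (g j))" by (simp add: b_def)
  obtain c0 where c0: "c0 \<in> X" using gX by blast
  define M where "M = sc b c0"
  have sc_X: "sc b c = M" if "c \<in> X" for c
  proof -
    have "real (card {i. g i = c}) = real (card {i. g i = c0})" using fiber that c0 by simp
    then show ?thesis by (simp only: M_def b sc_Some of_nat_eq_iff)
  qed
  have sc_0: "sc b c = 0" if "c \<notin> X" for c
    using gX that b by (auto simp: sc_Some)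
  have "2 \<le> real M"
    using fiber c0 Xn X2 b by (simp add: M_def sc_Some field_simps)
  then have M2: "2 \<le> M" by simp
  have WX: "W b = X"
  proof (rule W_eqI)
    show "sc b d \<le> M" for d using sc_X sc_0 by (cases "d \<in> X") auto
    show "x \<in> X \<longleftrightarrow> sc b x = M" for x using sc_X sc_0 M2 by (cases "x \<in> X") auto
  qed (use c0 in blast)
  have gfav: "\<forall>j. g j = fav u j (W b)" using \<open>\<And>i. fav u i X = g i\<close> WX by simp
  have "PNE R \<epsilon> u b"
  proof (rule PNE_tiedI[OF inj _ b gfav])
    show "real (u i c) \<le> (\<Sum>d\<in>W b. real (u i d)) / real (card (W b))" if "c \<in> W b - {g i}" for i c
      using gmean that WX by simp
    show "TU R \<epsilon> u (b(i := Some c)) i \<le> TU R \<epsilon> u b i" if "c \<notin> W b" for i c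
    proof -
      have "TU R \<epsilon> u (b(i := Some c)) i \<le> ereal (EU R u (b(i := Some c)) i + \<epsilon>)"
        using eps(1) by (simp add: TU_Some)
      also have "\<dots> \<le> ereal (EU R u b i)"
        using EU_fun_upd_loser[OF inj eps(2,3) b gfav] X2 M2 sc_X sc_0 that WX by simp
      also have "\<dots> \<le> TU R \<epsilon> u b i" using eps(1) b by (simp add: TU_Some)
      finally show ?thesis .
    qed
  qed (use eps in simp)
  then show ?thesis using WX X2 by (simp add: b_def)
qed

theorem theorem4:
  fixes u :: "'v::finite \<Rightarrow> 'c::finite \<Rightarrow> nat" and R :: rule and \<epsilon> :: real
  assumes inj: "\<forall>i. inj (u i)"
    and n2: "card (UNIV :: 'v set) \<ge> 2"
    and eps: "0 < \<epsilon>" "\<epsilon> < 1 / real (card (UNIV :: 'c set))" "\<epsilon> < 1 / real (card (UNIV :: 'v set))"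
  shows "((\<exists>b. PNE R \<epsilon> u b \<and> card (W b) \<ge> 2) \<longleftrightarrow> (cond1 u \<or> (\<exists>X. cond2 u X)))
    \<and> (cond1 u \<longrightarrow> PNE R \<epsilon> u (\<lambda>i. Some (top u i)))
    \<and> (\<forall>X. cond2 u X \<longrightarrow> PNE R \<epsilon> u (\<lambda>i. Some (fav u i X)))
    \<and> (\<forall>b. PNE R \<epsilon> u b \<and> card (W b) \<ge> 2 \<longrightarrow>
          (cond1 u \<and> b = (\<lambda>i. Some (top u i))) \<or>
          (\<exists>X. cond2 u X \<and> b = (\<lambda>i. Some (fav u i X))))"
  using PNE_top_if_cond1[OF inj n2 eps(1)] PNE_fav_if_cond2[OF inj eps]
    PNE_cond1_or_cond2[OF inj n2 eps]
  by blast

end
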